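(* Let $\mathcal X$ be a nonsingular plane curve of degree $r+1$ (with $r\ge2$) and genus $g$ over $\mathbf F_q$ with at least one $\mathbf F_q$-rational point. Let $U(\mathcal X)$ be its set of jumps. Then: (1) $|U(\mathcal X)|=R(2g-2)$, and this number equals $r^2/4$ if $r$ is even and $(r^2-1)/4$ if $r$ is odd. (2) $U(\mathcal X)=\{\alpha r+\beta: -1\le\alpha\le r-2,\ 0\le\beta\le r-1,\ \text{and } (2\beta+2\le\alpha \text{ or } \beta=r-1)\}\setminus\{2g-1\}$.
   Context: $\ell(A)=\dim_{\mathbf F_q}\mathcal L(A)$. For $i\ge1$, $\gamma_i=\min\{\deg A: A\ \mathbf F_q\text{-rational divisor},\ \ell(A)\ge i\}$. For such a plane curve it is known that $GS(\mathcal X)=\{\gamma_i\}$ is the numerical semigroup generated by $r$ and $r+1$, and that $g=r(r-1)/2$. Let $\mathbf N'=\{-1,0,1,\dots\}$. Define $\tilde\ell(-1)=0$ and $\tilde\ell(b)=\max\{i\ge1:\gamma_i\le b\}$ for $b\ge0$. For $-1\le N\le 2g-2$, let $R(N)=\min\{\tilde\ell(a)+\tilde\ell(b):a,b\in\mathbf N',\ a+b=N\}$, and set $R(-2):=0$. An integer $N$ with $-1\le N\le 2g-2$ is a jump of $\mathcal X$ if $R(N)>R(N-1)$; $U(\mathcal X)$ is the set of jumps. *)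

theory Defs
  imports Main "HOL-Library.Infinite_Set"
begin

text \<open>Combinatorial data of a nonsingular plane curve of degree r+1:
  its gonality sequence is the numerical semigroup generated by r and r+1,
  and its genus is r(r-1)/2.\<close>

definition gon_semigroup :: "nat \<Rightarrow> nat set" where
  "gon_semigroup r = {a * r + b * (r + 1) | a b. True}"

definition gam :: "nat \<Rightarrow> nat \<Rightarrow> nat" where
  "gam r i = enumerate (gon_semigroup r) (i - 1)"

definition genus :: "nat \<Rightarrow> int" where
  "genus r = int (r * (r - 1) div 2)"

definition ltilde :: "nat \<Rightarrow> int \<Rightarrow> nat" where
  "ltilde r b = (if b < 0 then 0 else Max {i. 1 \<le> i \<and> int (gam r i) \<le> b})"

definition RR :: "nat \<Rightarrow> int \<Rightarrow> nat" where
  "RR r N = (if N = -2 then 0 else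
     Min {ltilde r a + ltilde r b | a b. -1 \<le> a \<and> -1 \<le> b \<and> a + b = N})"

definition jumps :: "nat \<Rightarrow> int set" where
  "jumps r = {N. -1 \<le> N \<and> N \<le> 2 * genus r - 2 \<and> RR r N > RR r (N - 1)}"

end

theory Submission
  imports Defs
begin

text \<open>Writing \<open>n = p * r + i\<close> with \<open>i < r\<close>, the semigroup generated by \<open>r\<close> and \<open>r + 1\<close>
  contains \<open>n\<close> iff \<open>i \<le> p\<close>. Hence the number of its elements below \<open>p * r + i\<close>, which is
  \<open>ltilde\<close> at \<open>p * r + i - 1\<close>, equals \<open>T p + min i (p + 1)\<close>, with \<open>T\<close> the triangular
  numbers. For \<open>N + 2 = K * r + j \<le> 2 g\<close>, convexity of \<open>T\<close> makes the balanced split of \<open>N + 2\<close>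
  into \<open>\<lfloor>K/2\<rfloor> r + j\<close> and \<open>\<lceil>K/2\<rceil> r\<close> optimal, so
  \<open>R(N) = T \<lfloor>K/2\<rfloor> + T \<lceil>K/2\<rceil> + min j (\<lfloor>K/2\<rfloor> + 1)\<close>. Thus \<open>R\<close> grows by one at \<open>N\<close>
  exactly when \<open>0 < j \<le> \<lfloor>K/2\<rfloor> + 1\<close> and is constant otherwise; counting these steps gives
  \<open>|U| = R(2g - 2) = T \<lfloor>(r-1)/2\<rfloor> + T \<lceil>(r-1)/2\<rceil> = \<lfloor>r\<^sup>2/4\<rfloor>\<close>, and rewriting
  \<open>N = K * r + j - 2\<close> as \<open>\<alpha> * r + \<beta>\<close> turns the jump condition into the stated description of \<open>U\<close>.\<close>

lemma enumerate_le_iff_card: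
  fixes S :: "nat set"
  assumes "infinite S"
  shows "enumerate S n \<le> B \<longleftrightarrow> n < card {s \<in> S. s \<le> B}"
proof -
  have "{s \<in> S. s < enumerate S n} = enumerate S ` {..<n}"
  proof (intro equalityI subsetI)
    fix s assume "s \<in> {s \<in> S. s < enumerate S n}"
    moreover obtain k where "s = enumerate S k"
      using calculation enumerate_Ex[OF assms] by auto
    ultimately show "s \<in> enumerate S ` {..<n}"
      using assms by auto
  qed (use assms enumerate_in_set in auto)
  then have card_below: "card {s \<in> S. s < enumerate S n} = n"
    using inj_enumerate[OF assms] by (simp add: card_image inj_on_subset)
  have fin: "finite {s \<in> S. s \<le> B}"
    by simp
  show ?thesis
  proof
    assume "enumerate S n \<le> B"
    then have "insert (enumerate S n) {s \<in> S. s < enumerate S n} \<subseteq> {s \<in> S. s \<le> B}"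
      using enumerate_in_set[OF assms] by auto
    from card_mono[OF fin this] show "n < card {s \<in> S. s \<le> B}"
      using card_below by simp
  next
    assume "n < card {s \<in> S. s \<le> B}"
    show "enumerate S n \<le> B"
    proof (rule ccontr)
      assume "\<not> enumerate S n \<le> B"
      then have "{s \<in> S. s \<le> B} \<subseteq> {s \<in> S. s < enumerate S n}"
        by auto
      from card_mono[OF _ this] show False
        using card_below \<open>n < card {s \<in> S. s \<le> B}\<close> by simp
    qed
  qed
qed

lemma card_unit_steps:
  fixes f :: "nat \<Rightarrow> nat"
  assumes "\<And>M. 0 < M \<Longrightarrow> M \<le> n \<Longrightarrow> f M = f (M - 1) + (if P M then 1 else 0)"
  shows "f n = f 0 + card {M \<in> {1..n}. P M}"
  using assms
proof (induction n)
  case (Suc n)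
  have "{M \<in> {1..Suc n}. P M} = (if P (Suc n) then insert (Suc n) else id) {M \<in> {1..n}. P M}"
    by (auto simp: le_Suc_eq)
  then show ?case
    using Suc.IH Suc.prems[of "Suc n"] Suc.prems by simp
qed simp

lemma div_le_pred_if_le_mult_pred: "(M::nat) \<le> r * (r - 1) \<Longrightarrow> M div r \<le> r - 1"
  using div_le_mono[of M "r * (r - 1)" r] by (cases "r = 0") simp_all

fun triangle :: "nat \<Rightarrow> nat" where
  "triangle 0 = 0"
| "triangle (Suc p) = triangle p + Suc p"

lemma double_triangle: "2 * triangle p = p * (p + 1)"
  by (induction p) auto

lemma triangle_transfer:
  assumes "p + d \<le> q"
  shows "triangle (p + d) + triangle q + d \<le> triangle p + triangle (q + d)"
proof -
  obtain e where q: "q = p + d + e"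
    using assms le_Suc_ex by blast
  define c where "c = d * (d + e)"
  have "2 * (triangle p + triangle (q + d)) = 2 * (triangle (p + d) + triangle q) + 2 * c"
    unfolding distrib_left double_triangle q c_def by (simp add: algebra_simps)
  moreover have "d \<le> c"
    unfolding c_def by (cases d) auto
  ultimately show ?thesis
    by simp
qed

definition triangle_halves :: "nat \<Rightarrow> nat" where
  "triangle_halves K = triangle (K div 2) + triangle (K - K div 2)"

lemma triangle_halves_add_le:
  assumes "p \<le> q"
  shows "triangle_halves (p + q) + ((p + q) div 2 - p) \<le> triangle p + triangle q"
  using triangle_transfer[of p "(p + q) div 2 - p" "p + q - (p + q) div 2"] assms
  by (simp add: triangle_halves_def)

lemma triangle_halves_le: "triangle_halves (p + q) \<le> triangle p + triangle q"
  using triangle_halves_add_le[of p q] triangle_halves_add_le[of q p]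
  by (cases "p \<le> q") (simp_all add: add.commute)

lemma triangle_halves_Suc: "triangle_halves (Suc K) = triangle_halves K + K div 2 + 1"
  by (cases "even K") (auto elim!: evenE oddE simp: triangle_halves_def)

lemma triangle_halves_closed_form:
  "triangle_halves K = (if even (K + 1) then (K + 1)^2 div 4 else ((K + 1)^2 - 1) div 4)"
proof (cases "even K")
  case True
  then obtain m where "K = 2 * m"
    by blast
  moreover have "((2 * m + 1)^2 - 1) div 4 = m * (m + 1)"
    by (simp add: power2_eq_square algebra_simps)
  ultimately show ?thesis
    using double_triangle[of m] by (simp add: triangle_halves_def)
next
  case False
  then obtain m where "K = 2 * m + 1"
    by (blast elim: oddE)
  moreover have "(2 * m + 2)^2 div 4 = triangle m + triangle (Suc m)"
    using double_triangle[of m] by (simp add: power2_eq_square algebra_simps)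
  ultimately show ?thesis
    by (simp add: triangle_halves_def)
qed

lemma mult_add_mem_gon_semigroup: "a * r + b * (r + 1) \<in> gon_semigroup r"
  unfolding gon_semigroup_def by blast

lemma gon_semigroup_iff:
  assumes "i < r"
  shows "p * r + i \<in> gon_semigroup r \<longleftrightarrow> i \<le> p"
proof
  assume "i \<le> p"
  then have "p * r + i = (p - i) * r + i * (r + 1)"
    by (simp add: algebra_simps diff_mult_distrib)
  then show "p * r + i \<in> gon_semigroup r"
    by (metis mult_add_mem_gon_semigroup)
next
  assume "p * r + i \<in> gon_semigroup r"
  then obtain a b where ab: "p * r + i = (a + b) * r + b"
    unfolding gon_semigroup_def by (auto simp: algebra_simps)
  show "i \<le> p"
  proof (rule ccontr)
    assume "\<not> i \<le> p"
    have "(a + b) * r < (p + 1) * r"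
      using ab assms by (simp add: algebra_simps)
    then have "a + b \<le> p"
      by (simp only: mult_less_cancel2) simp
    then have "b < r"
      using \<open>\<not> i \<le> p\<close> assms by linarith
    then have "i = b"
      using arg_cong[OF ab, of "\<lambda>n. n mod r"] assms by simp
    then show False
      using \<open>a + b \<le> p\<close> \<open>\<not> i \<le> p\<close> by linarith
  qed
qed

lemma infinite_gon_semigroup:
  assumes "0 < r"
  shows "infinite (gon_semigroup r)"
proof -
  have "range (\<lambda>a. a * r) \<subseteq> gon_semigroup r"
    using mult_add_mem_gon_semigroup[of _ r 0] by auto
  moreover have "inj (\<lambda>a. a * r)"
    using assms by (auto simp: inj_def)
  ultimately show ?thesis
    using range_inj_infinite infinite_super by blast
qed

definition count_below :: "nat \<Rightarrow> nat \<Rightarrow> nat" where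
  "count_below r n = card {s \<in> gon_semigroup r. s < n}"

lemma count_below_0 [simp]: "count_below r 0 = 0"
  by (simp add: count_below_def)

lemma count_below_Suc:
  "count_below r (Suc n) = count_below r n + (if n \<in> gon_semigroup r then 1 else 0)"
proof -
  have "{s \<in> gon_semigroup r. s < Suc n}
      = (if n \<in> gon_semigroup r then insert n else id) {s \<in> gon_semigroup r. s < n}"
    by (auto simp: less_Suc_eq)
  then show ?thesis
    unfolding count_below_def by simp
qed

lemma count_below_row:
  "i \<le> r \<Longrightarrow> count_below r (p * r + i) = count_below r (p * r) + min i (p + 1)"
proof (induction i)
  case (Suc i)
  then show ?case
    using count_below_Suc[of r "p * r + i"] gon_semigroup_iff[of i r p] by auto
qed simp

lemma count_below_block: "p \<le> r \<Longrightarrow> count_below r (p * r) = triangle p"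
proof (induction p)
  case (Suc p)
  then show ?case
    using count_below_row[of r r p] by (simp add: add.commute)
qed simp

lemma count_below_eq:
  "p \<le> r \<Longrightarrow> i \<le> r \<Longrightarrow> count_below r (p * r + i) = triangle p + min i (p + 1)"
  by (simp add: count_below_row count_below_block)

lemma ltilde_eq_count_below:
  assumes "0 < r"
  shows "ltilde r (int n - 1) = count_below r n"
proof (cases n)
  case (Suc B)
  define c where "c = card {s \<in> gon_semigroup r. s \<le> B}"
  have "0 \<in> gon_semigroup r"
    using mult_add_mem_gon_semigroup[of 0 r 0] by simp
  then have "c \<noteq> 0"
    unfolding c_def by (subst card_0_eq) auto
  have "gam r i \<le> B \<longleftrightarrow> i \<le> c" if "1 \<le> i" for i
  proof -
    have "gam r i \<le> B \<longleftrightarrow> i - 1 < c"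
      unfolding gam_def c_def by (rule enumerate_le_iff_card[OF infinite_gon_semigroup[OF assms]])
    then show ?thesis
      using that by linarith
  qed
  then have "{i. 1 \<le> i \<and> gam r i \<le> B} = {1..c}"
    by auto
  then have "ltilde r (int n - 1) = c"
    using Suc \<open>c \<noteq> 0\<close> by (simp add: ltilde_def Max_eq_iff)
  then show ?thesis
    unfolding count_below_def c_def Suc less_Suc_eq_le .
qed (simp add: ltilde_def)

lemma RR_eq_Min_count_below:
  assumes "0 < r" "N + 2 = int M" "1 \<le> M"
  shows "RR r N = Min ((\<lambda>x. count_below r x + count_below r (M - x)) ` {..M})"
proof -
  have "{ltilde r a + ltilde r b | a b. -1 \<le> a \<and> -1 \<le> b \<and> a + b = N}
      = (\<lambda>x. count_below r x + count_below r (M - x)) ` {..M}"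
  proof (intro equalityI subsetI)
    fix v assume "v \<in> {ltilde r a + ltilde r b | a b. -1 \<le> a \<and> -1 \<le> b \<and> a + b = N}"
    then obtain a b where ab: "-1 \<le> a" "-1 \<le> b" "a + b = N" "v = ltilde r a + ltilde r b"
      by blast
    define x where "x = nat (a + 1)"
    have "a = int x - 1" "b = int (M - x) - 1" "x \<le> M"
      using ab assms(2) unfolding x_def by auto
    moreover from ab(4) have "v = count_below r x + count_below r (M - x)"
      unfolding calculation(1,2) ltilde_eq_count_below[OF assms(1)] .
    ultimately show "v \<in> (\<lambda>x. count_below r x + count_below r (M - x)) ` {..M}"
      by auto
  next
    fix v assume "v \<in> (\<lambda>x. count_below r x + count_below r (M - x)) ` {..M}"
    then obtain x where x: "x \<le> M" "v = count_below r x + count_below r (M - x)"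
      by auto
    have "v = ltilde r (int x - 1) + ltilde r (int (M - x) - 1)"
      unfolding ltilde_eq_count_below[OF assms(1)] by (rule x(2))
    moreover have "(int x - 1) + (int (M - x) - 1) = N"
      using x(1) assms(2) by simp
    ultimately show "v \<in> {ltilde r a + ltilde r b | a b. -1 \<le> a \<and> -1 \<le> b \<and> a + b = N}"
      by fastforce
  qed
  moreover have "N \<noteq> -2"
    using assms(2,3) by simp
  ultimately show ?thesis
    by (simp add: RR_def)
qed

text \<open>For \<open>M = K * r + j\<close> with \<open>j < r\<close>, this is the value of
  \<open>count_below r x + count_below r (M - x)\<close> at the balanced split
  \<open>x = K div 2 * r + j\<close>, \<open>M - x = (K - K div 2) * r\<close>.\<close>

definition balanced_value :: "nat \<Rightarrow> nat \<Rightarrow> nat" where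
  "balanced_value r M = triangle_halves (M div r) + min (M mod r) (M div r div 2 + 1)"

lemma balanced_value_mult_add:
  "j < r \<Longrightarrow> balanced_value r (K * r + j) = triangle_halves K + min j (K div 2 + 1)"
  by (simp add: balanced_value_def)

lemma balanced_value_le_no_carry:
  assumes "p \<le> q" "i + j < r"
  shows "balanced_value r ((p + q) * r + (i + j))
    \<le> (triangle p + min i (p + 1)) + (triangle q + min j (q + 1))"
proof -
  have "min (i + j) ((p + q) div 2 + 1) \<le> ((p + q) div 2 - p) + min i (p + 1) + min j (q + 1)"
    using assms(1) by auto
  then show ?thesis
    using triangle_halves_add_le[OF assms(1)] assms(2) by (simp add: balanced_value_mult_add)
qed

lemma balanced_value_le_carry:
  assumes "p \<le> q" "p + q + 2 \<le> r" "i < r" "j < r" "r \<le> i + j"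
  shows "balanced_value r ((p + q + 1) * r + (i + j - r))
    \<le> (triangle p + min i (p + 1)) + (triangle q + min j (q + 1))"
proof -
  have "triangle_halves (Suc p + q) \<le> triangle p + (p + 1) + triangle q"
    using triangle_halves_le[of "Suc p" q] by simp
  moreover have "(p + 1) + min (i + j - r) ((p + q + 1) div 2 + 1) \<le> min i (p + 1) + min j (q + 1)"
    using assms by auto
  moreover have "balanced_value r ((p + q + 1) * r + (i + j - r))
      = triangle_halves (p + q + 1) + min (i + j - r) ((p + q + 1) div 2 + 1)"
    using assms(3,4) by (intro balanced_value_mult_add) linarith
  ultimately show ?thesis
    by simp
qed

lemma balanced_value_le_split:
  assumes "0 < r" "x + y \<le> r * (r - 1)"
  shows "balanced_value r (x + y) \<le> count_below r x + count_below r y"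
  using assms(2)
proof (induction x y rule: linorder_wlog)
  case (sym x y)
  then show ?case
    by (simp add: add.commute)
next
  case (le x y)
  define p i q j where "p = x div r" "i = x mod r" "q = y div r" "j = y mod r"
  have x: "x = p * r + i" and y: "y = q * r + j" and "i < r" "j < r" and "r \<noteq> 0"
    using assms(1) unfolding p_i_q_j_def by simp_all
  have "p \<le> q"
    using le(1) unfolding p_i_q_j_def by (rule div_le_mono)
  have bound: "(x + y) div r \<le> r - 1"
    using le(2) by (rule div_le_pred_if_le_mult_pred)
  moreover have "p \<le> (x + y) div r" "q \<le> (x + y) div r"
    unfolding p_i_q_j_def by (simp_all add: div_le_mono)
  ultimately have "count_below r x = triangle p + min i (p + 1)"
      "count_below r y = triangle q + min j (q + 1)"
    unfolding x y using \<open>i < r\<close> \<open>j < r\<close> by (simp_all add: count_below_eq)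
  moreover have "balanced_value r (x + y) \<le> (triangle p + min i (p + 1)) + (triangle q + min j (q + 1))"
  proof (cases "i + j < r")
    case True
    have "x + y = (p + q) * r + (i + j)"
      unfolding x y by (simp add: algebra_simps)
    then show ?thesis
      using balanced_value_le_no_carry[OF \<open>p \<le> q\<close> True] by simp
  next
    case False
    have xy: "x + y = (p + q + 1) * r + (i + j - r)"
      using False unfolding x y by (simp add: algebra_simps)
    have "i + j - r < r"
      using \<open>i < r\<close> \<open>j < r\<close> by linarith
    then have "(x + y) div r = p + q + 1"
      unfolding xy by (simp only: div_mult_self3[OF \<open>r \<noteq> 0\<close>] div_less add_0_left)
    then have "p + q + 2 \<le> r"
      using bound by simp
    then show ?thesis
      unfolding xy using balanced_value_le_carry \<open>p \<le> q\<close> \<open>i < r\<close> \<open>j < r\<close> False by simp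
  qed
  ultimately show ?case
    by simp
qed

lemma balanced_value_attained:
  assumes "0 < r" "M \<le> r * (r - 1)"
  shows "\<exists>x \<le> M. count_below r x + count_below r (M - x) = balanced_value r M"
proof -
  define K j where "K = M div r" "j = M mod r"
  have M: "M = K * r + j" and "j < r"
    using assms(1) unfolding K_j_def by simp_all
  have "K \<le> r - 1"
    unfolding K_j_def using assms(2) by (rule div_le_pred_if_le_mult_pred)
  define x where "x = K div 2 * r + j"
  have "M - x = (K - K div 2) * r"
    unfolding M x_def by (simp add: diff_mult_distrib)
  moreover have "x \<le> M"
    unfolding M x_def by (simp add: div_le_dividend)
  ultimately show ?thesis
    using \<open>K \<le> r - 1\<close> \<open>j < r\<close>
    by (intro exI[of _ x]) (simp add: x_def M count_below_eq count_below_block balanced_value_mult_add triangle_halves_def)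
qed

lemma Min_count_below_splits:
  assumes "0 < r" "M \<le> r * (r - 1)"
  shows "Min ((\<lambda>x. count_below r x + count_below r (M - x)) ` {..M}) = balanced_value r M"
proof (rule Min_eqI)
  fix v
  assume "v \<in> (\<lambda>x. count_below r x + count_below r (M - x)) ` {..M}"
  then obtain x where "x \<le> M" "v = count_below r x + count_below r (M - x)"
    by auto
  then show "balanced_value r M \<le> v"
    using balanced_value_le_split[OF assms(1), of x "M - x"] assms(2) by simp
next
  obtain x where "x \<le> M" "count_below r x + count_below r (M - x) = balanced_value r M"
    using balanced_value_attained[OF assms] by blast
  then show "balanced_value r M \<in> (\<lambda>x. count_below r x + count_below r (M - x)) ` {..M}"
    by (intro image_eqI[of _ _ x]) auto
qed simp

lemma RR_eq_balanced_value:
  assumes "0 < r" "N + 2 = int M" "M \<le> r * (r - 1)"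
  shows "RR r N = balanced_value r M"
proof (cases "M = 0")
  case True
  then show ?thesis
    using assms(2) by (simp add: RR_def balanced_value_def triangle_halves_def)
next
  case False
  then show ?thesis
    using RR_eq_Min_count_below[OF assms(1,2)] Min_count_below_splits[OF assms(1,3)] by simp
qed

lemma two_genus: "2 * genus r = int (r * (r - 1))"
proof -
  have "even (r * (r - 1))"
    by (cases "even r") auto
  then show ?thesis
    unfolding genus_def by (metis dvd_mult_div_cancel of_nat_mult of_nat_numeral)
qed

definition jump_at :: "nat \<Rightarrow> nat \<Rightarrow> bool" where
  "jump_at r M \<longleftrightarrow> M mod r \<noteq> 0 \<and> M mod r \<le> M div r div 2 + 1"

lemma balanced_value_step:
  assumes "0 < r" "0 < M" "M \<le> r * (r - 1)"
  shows "balanced_value r M = balanced_value r (M - 1) + (if jump_at r M then 1 else 0)"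
proof -
  define K j where "K = M div r" "j = M mod r"
  have M: "M = K * r + j" and "j < r"
    using assms(1) unfolding K_j_def by simp_all
  have "K \<le> r - 1"
    unfolding K_j_def using assms(3) by (rule div_le_pred_if_le_mult_pred)
  have value_M: "balanced_value r M = triangle_halves K + min j (K div 2 + 1)"
    unfolding M using \<open>j < r\<close> by (rule balanced_value_mult_add)
  show ?thesis
  proof (cases "j = 0")
    case False
    then have "M - 1 = K * r + (j - 1)"
      unfolding M by simp
    then have "balanced_value r (M - 1) = triangle_halves K + min (j - 1) (K div 2 + 1)"
      using \<open>j < r\<close> by (simp add: balanced_value_mult_add)
    then show ?thesis
      using False value_M unfolding jump_at_def K_j_def[symmetric] by (auto simp: min_def)
  next
    case True
    then obtain L where "K = Suc L"
      using assms(2) unfolding M by (cases K) auto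
    then have "M - 1 = L * r + (r - 1)"
      unfolding M True using assms(1) by simp
    then have "balanced_value r (M - 1) = triangle_halves L + min (r - 1) (L div 2 + 1)"
      using assms(1) by (simp only: balanced_value_mult_add diff_less zero_less_one)
    moreover have "L div 2 + 1 \<le> r - 1"
      using \<open>K \<le> r - 1\<close> \<open>K = Suc L\<close> by linarith
    ultimately show ?thesis
      using True \<open>K = Suc L\<close> value_M unfolding jump_at_def K_j_def[symmetric]
      by (simp add: triangle_halves_Suc)
  qed
qed

lemma RR_increases_iff_jump_at:
  assumes "0 < r" "0 < M" "M \<le> r * (r - 1)"
  shows "RR r (int M - 2 - 1) < RR r (int M - 2) \<longleftrightarrow> jump_at r M"
proof -
  have "RR r (int M - 2) = balanced_value r M"
    using assms(1,3) by (intro RR_eq_balanced_value) simp_all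
  moreover have "RR r (int M - 2 - 1) = balanced_value r (M - 1)"
    using assms by (intro RR_eq_balanced_value) auto
  ultimately show ?thesis
    using balanced_value_step[OF assms] by simp
qed

lemma jumps_eq_image:
  assumes "0 < r"
  shows "jumps r = (\<lambda>M. int M - 2) ` {M \<in> {1..r * (r - 1)}. jump_at r M}"
proof (intro equalityI subsetI)
  fix N
  assume "N \<in> jumps r"
  then have N: "-1 \<le> N" "N \<le> int (r * (r - 1)) - 2" "RR r (N - 1) < RR r N"
    unfolding jumps_def two_genus by auto
  define M where "M = nat (N + 2)"
  have "N = int M - 2" "0 < M"
    using N(1) unfolding M_def by auto
  moreover have "M \<le> r * (r - 1)"
    unfolding M_def nat_le_iff using N(2) by linarith
  ultimately show "N \<in> (\<lambda>M. int M - 2) ` {M \<in> {1..r * (r - 1)}. jump_at r M}"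
    using N(3) RR_increases_iff_jump_at[OF assms] by auto
next
  fix N
  assume "N \<in> (\<lambda>M. int M - 2) ` {M \<in> {1..r * (r - 1)}. jump_at r M}"
  then obtain M where M: "N = int M - 2" "0 < M" "M \<le> r * (r - 1)" "jump_at r M"
    by auto
  then have "RR r (N - 1) < RR r N"
    using RR_increases_iff_jump_at[OF assms] by simp
  moreover have "int M \<le> int (r * (r - 1))"
    using M(3) by (simp only: of_nat_le_iff)
  then have "-1 \<le> N" "N \<le> int (r * (r - 1)) - 2"
    using M(1,2) by linarith+
  ultimately show "N \<in> jumps r"
    unfolding jumps_def two_genus by blast
qed

lemma card_jumps:
  assumes "0 < r"
  shows "card (jumps r) = balanced_value r (r * (r - 1))"
proof -
  have "card (jumps r) = card {M \<in> {1..r * (r - 1)}. jump_at r M}"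
    unfolding jumps_eq_image[OF assms] by (rule card_image) (auto simp: inj_on_def)
  also have "\<dots> = balanced_value r (r * (r - 1))"
    using card_unit_steps[of "r * (r - 1)" "balanced_value r" "jump_at r"] balanced_value_step[OF assms]
    by (simp add: balanced_value_def triangle_halves_def)
  finally show ?thesis .
qed

lemma jump_at_imp_pattern:
  assumes "0 < M" "M \<le> r * (r - 1)" "jump_at r M"
  shows "\<exists>\<alpha> \<beta>. int M - 2 = \<alpha> * int r + \<beta> \<and> -1 \<le> \<alpha> \<and> \<alpha> \<le> int r - 2 \<and> 0 \<le> \<beta> \<and> \<beta> \<le> int r - 1
    \<and> (2 * \<beta> + 2 \<le> \<alpha> \<or> \<beta> = int r - 1)"
proof -
  define K j where "K = M div r" "j = M mod r"
  have "0 < r"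
    using assms(1,2) by (cases r) auto
  then have M: "M = K * r + j" and "j < r"
    unfolding K_j_def by simp_all
  have "0 < j" "2 * j \<le> K + 2"
    using assms(3) unfolding jump_at_def K_j_def by auto
  have "K \<le> r - 1"
    unfolding K_j_def using assms(2) by (rule div_le_pred_if_le_mult_pred)
  moreover have "K \<noteq> r - 1"
    using assms(2) \<open>0 < j\<close> unfolding M by (auto simp: mult.commute)
  ultimately have K: "int K \<le> int r - 2"
    by linarith
  have iM: "int M = int K * int r + int j"
    unfolding M by simp
  show ?thesis
  proof (cases "j = 1")
    case True
    \<comment> \<open>subtracting 2 borrows from the quotient: \<open>M - 2 = (K - 1) * r + (r - 1)\<close>\<close>
    then show ?thesis
      using iM K \<open>0 < r\<close>
      by (intro exI[of _ "int K - 1"] exI[of _ "int r - 1"]) (simp add: algebra_simps)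
  next
    case False
    then show ?thesis
      using iM K \<open>0 < j\<close> \<open>j < r\<close> \<open>2 * j \<le> K + 2\<close>
      by (intro exI[of _ "int K"] exI[of _ "int j - 2"]) simp
  qed
qed

lemma pattern_imp_jump_at:
  assumes "-1 \<le> \<alpha>" "\<alpha> \<le> int r - 2" "0 \<le> \<beta>" "\<beta> \<le> int r - 1" "2 * \<beta> + 2 \<le> \<alpha> \<or> \<beta> = int r - 1"
    and "\<alpha> * int r + \<beta> \<noteq> int (r * (r - 1)) - 1"
  shows "\<exists>M. \<alpha> * int r + \<beta> = int M - 2 \<and> 0 < M \<and> M \<le> r * (r - 1) \<and> jump_at r M"
proof -
  obtain K j where KJ: "int K * int r + int j = \<alpha> * int r + \<beta> + 2"
    and "K \<le> r - 2" "0 < j" "j < r" "2 * j \<le> K + 2"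
  proof (cases "\<beta> = int r - 1")
    case True
    have "\<alpha> \<noteq> int r - 2"
    proof
      assume "\<alpha> = int r - 2"
      have "\<alpha> * int r + \<beta> = int r * int r - int r - 1"
        unfolding True \<open>\<alpha> = int r - 2\<close> by (simp add: algebra_simps)
      moreover have "int (r * (r - 1)) = int r * int r - int r"
        using assms(4) True by (simp add: of_nat_diff algebra_simps)
      ultimately show False
        using assms(6) by simp
    qed
    then show thesis
      using that[of "nat (\<alpha> + 1)" 1] assms(1,2) True by (simp add: algebra_simps)
  next
    case False
    then show thesis
      using that[of "nat \<alpha>" "nat \<beta> + 2"] assms(1-5) by simp
  qed
  have "K * r + j < (K + 1) * r"
    using \<open>j < r\<close> by simp
  also have "\<dots> \<le> (r - 1) * r"
    using \<open>K \<le> r - 2\<close> \<open>0 < j\<close> \<open>j < r\<close> by (intro mult_le_mono1) linarith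
  finally have "K * r + j \<le> r * (r - 1)"
    by (simp add: mult.commute)
  moreover have "jump_at r (K * r + j)"
    using \<open>0 < j\<close> \<open>j < r\<close> \<open>2 * j \<le> K + 2\<close> by (simp add: jump_at_def)
  ultimately show ?thesis
    using KJ \<open>0 < j\<close> by (intro exI[of _ "K * r + j"]) (simp add: algebra_simps)
qed

lemma jumps_eq_pattern:
  assumes "0 < r"
  shows "jumps r = {\<alpha> * int r + \<beta> | \<alpha> \<beta>. -1 \<le> \<alpha> \<and> \<alpha> \<le> int r - 2 \<and> 0 \<le> \<beta> \<and> \<beta> \<le> int r - 1
                    \<and> (2 * \<beta> + 2 \<le> \<alpha> \<or> \<beta> = int r - 1)} - {2 * genus r - 1}"
proof (intro equalityI subsetI)
  fix N
  assume "N \<in> jumps r"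
  then obtain M where M: "N = int M - 2" "0 < M" "M \<le> r * (r - 1)" "jump_at r M"
    unfolding jumps_eq_image[OF assms] by auto
  have "int M \<le> int (r * (r - 1))"
    using M(3) by (simp only: of_nat_le_iff)
  then have "N \<noteq> int (r * (r - 1)) - 1"
    using M(1) by linarith
  moreover obtain \<alpha> \<beta> where "N = \<alpha> * int r + \<beta>" "-1 \<le> \<alpha>" "\<alpha> \<le> int r - 2" "0 \<le> \<beta>" "\<beta> \<le> int r - 1"
      "2 * \<beta> + 2 \<le> \<alpha> \<or> \<beta> = int r - 1"
    using jump_at_imp_pattern[OF M(2-4)] M(1) by blast
  ultimately show "N \<in> {\<alpha> * int r + \<beta> | \<alpha> \<beta>. -1 \<le> \<alpha> \<and> \<alpha> \<le> int r - 2 \<and> 0 \<le> \<beta> \<and> \<beta> \<le> int r - 1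
                    \<and> (2 * \<beta> + 2 \<le> \<alpha> \<or> \<beta> = int r - 1)} - {2 * genus r - 1}"
    unfolding two_genus by blast
next
  fix N
  assume "N \<in> {\<alpha> * int r + \<beta> | \<alpha> \<beta>. -1 \<le> \<alpha> \<and> \<alpha> \<le> int r - 2 \<and> 0 \<le> \<beta> \<and> \<beta> \<le> int r - 1
                    \<and> (2 * \<beta> + 2 \<le> \<alpha> \<or> \<beta> = int r - 1)} - {2 * genus r - 1}"
  then obtain \<alpha> \<beta> where "N = \<alpha> * int r + \<beta>" and pattern: "-1 \<le> \<alpha>" "\<alpha> \<le> int r - 2" "0 \<le> \<beta>"
      "\<beta> \<le> int r - 1" "2 * \<beta> + 2 \<le> \<alpha> \<or> \<beta> = int r - 1" "\<alpha> * int r + \<beta> \<noteq> int (r * (r - 1)) - 1"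
    unfolding two_genus by blast
  then obtain M where "N = int M - 2" "0 < M" "M \<le> r * (r - 1)" "jump_at r M"
    using pattern_imp_jump_at[OF pattern] by blast
  then show "N \<in> jumps r"
    unfolding jumps_eq_image[OF assms] by force
qed

theorem lemma3p16:
  fixes r :: nat
  assumes "r \<ge> 2"
  shows "card (jumps r) = RR r (2 * genus r - 2)
       \<and> RR r (2 * genus r - 2) = (if even r then r^2 div 4 else (r^2 - 1) div 4)
       \<and> jumps r = {\<alpha> * int r + \<beta> | \<alpha> \<beta>. -1 \<le> \<alpha> \<and> \<alpha> \<le> int r - 2 \<and> 0 \<le> \<beta> \<and> \<beta> \<le> int r - 1
                    \<and> (2 * \<beta> + 2 \<le> \<alpha> \<or> \<beta> = int r - 1)} - {2 * genus r - 1}"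
proof -
  have "0 < r"
    using assms by simp
  have "RR r (2 * genus r - 2) = balanced_value r (r * (r - 1))"
    unfolding two_genus using \<open>0 < r\<close> by (intro RR_eq_balanced_value) simp_all
  moreover have "balanced_value r (r * (r - 1)) = triangle_halves (r - 1)"
    using balanced_value_mult_add[of 0 r "r - 1"] \<open>0 < r\<close> by (simp add: mult.commute)
  moreover have "triangle_halves (r - 1) = (if even r then r^2 div 4 else (r^2 - 1) div 4)"
    using triangle_halves_closed_form[of "r - 1"] \<open>0 < r\<close> by simp
  ultimately show ?thesis
    using card_jumps[OF \<open>0 < r\<close>] jumps_eq_pattern[OF \<open>0 < r\<close>] by simp
qed

end
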